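(* Let $(X,d)$ be a metric space and $T:X\to X$ a map. The system $(X,T)$ has sensitive dependence on initial conditions if and only if there is $\delta>0$ such that $r_\delta(x)$ is infinitesimal (in $\mathcal R$) for every $x\in X$.
   Context: $(X,T)$ has sensitive dependence on initial conditions if there is $\delta>0$ such that for every $x\in X$ and every neighborhood $U$ of $x$ there are $y\in U$ and $k\in\mathbb N$ with $d(T^k(x),T^k(y))>\delta$. For $x\in X$, $n\in\mathbb N$, $\epsilon>0$: $B(n,x,\epsilon)=\{y\in X: d(T^i(y),T^i(x))\le\epsilon \text{ for all } 0\le i\le n\}$ and $r(x,n,\epsilon)=\sup\{r>0: B_r(x)\subset B(n,x,\epsilon)\}$, where $B_r(x)$ is the open ball. Hyperreals: $\mathbb R^*$ is an ordered field containing $\mathbb R$, with a surjective ring homomorphism $J:\mathbb R^{\mathbb N}\to\mathbb R^*$ satisfying: if $a\in\mathbb R$ and there is $k\ge1$ with $\phi_{kn}\ge a$ for all $n\ge1$ then $J(\phi)\ge a$. $\xi\in\mathbb R^*$ is bounded if $|\xi|<k$ for some $k\in\mathbb N$. For nonzero $a,b$, $a\simeq b$ iff $a/b$, $b/a$ are bounded; $[a]$ is the class; $\mathbb R^*/{\simeq}$ is ordered by $[a]\le[b]$ iff for all $x\in[a],y\in[b]$, $x\simeq y$ or $x<y$. $\mathcal R$ is the totally ordered set of equivalence classes of monotone sequences in $\mathbb R^*/{\simeq}$ under $(a_i)\approx(b_j)$ iff neither $(a_i)<(b_j)$ nor $(b_j)<(a_i)$, where $(a_i)<(b_j)$ iff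 $\exists M$ with $a_n<b_m$ for all $n,m>M$; $\mathbb R^*/{\simeq}$ embeds into $\mathcal R$ as constant sequences. $r_\epsilon(x)=[J((r(x,n,\epsilon))_n)]$. An element of $\mathcal R$ is infinitesimal if it is strictly less than $c=[J(v)]$, the class of a constant sequence with value $v>0$ (the class of bounded, non-infinitesimal hyperreals). *)

theory Defs
  imports "HOL-Analysis.Analysis"
begin

definition sensitive :: "('a::metric_space \<Rightarrow> 'a) \<Rightarrow> bool" where
  "sensitive T \<longleftrightarrow> (\<exists>\<delta>>0. \<forall>x. \<forall>U. open U \<and> x \<in> U \<longrightarrow>
      (\<exists>y\<in>U. \<exists>k::nat. dist ((T ^^ k) x) ((T ^^ k) y) > \<delta>))"

definition bowen_ball :: "('a::metric_space \<Rightarrow> 'a) \<Rightarrow> nat \<Rightarrow> 'a \<Rightarrow> real \<Rightarrow> 'a set" where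
  "bowen_ball T n x \<epsilon> = {y. \<forall>i\<le>n. dist ((T ^^ i) y) ((T ^^ i) x) \<le> \<epsilon>}"

text \<open>r(x,n,eps) = sup of admissible radii.  Conventions:
  empty set of radii gives 0; an unbounded set of radii (i.e. the supremum is +infinity)
  is represented by the positive value 1.\<close>
definition rad :: "('a::metric_space \<Rightarrow> 'a) \<Rightarrow> 'a \<Rightarrow> nat \<Rightarrow> real \<Rightarrow> real" where
  "rad T x n \<epsilon> = (let S = {r. 0 < r \<and> ball x r \<subseteq> bowen_ball T n x \<epsilon>} in
      if S = {} then 0 else if \<not> bdd_above S then 1 else Sup S)"

text \<open>J : R^N -> R* a surjective (unital) ring homomorphism onto an ordered field; the real a
  is identified with J of the constant sequence a.\<close>
definition hyper_J :: "((nat \<Rightarrow> real) \<Rightarrow> 'h::linordered_field) \<Rightarrow> bool" where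
  "hyper_J J \<longleftrightarrow>
     (\<forall>\<phi> \<psi>. J (\<lambda>n. \<phi> n + \<psi> n) = J \<phi> + J \<psi>) \<and>
     (\<forall>\<phi> \<psi>. J (\<lambda>n. \<phi> n * \<psi> n) = J \<phi> * J \<psi>) \<and>
     J (\<lambda>n. 1) = 1 \<and>
     surj J \<and>
     (\<forall>\<phi> (a::real). (\<exists>k::nat\<ge>1. \<forall>n::nat\<ge>1. \<phi> (k * n) \<ge> a) \<longrightarrow> J \<phi> \<ge> J (\<lambda>n. a))"

definition hbounded :: "'h::linordered_field \<Rightarrow> bool" where
  "hbounded \<xi> \<longleftrightarrow> (\<exists>k::nat. \<bar>\<xi>\<bar> < of_nat k)"

definition hsim :: "'h::linordered_field \<Rightarrow> 'h \<Rightarrow> bool" where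
  "hsim a b \<longleftrightarrow> a \<noteq> 0 \<and> b \<noteq> 0 \<and> hbounded (a / b) \<and> hbounded (b / a)"

definition hcls :: "'h::linordered_field \<Rightarrow> 'h set" where
  "hcls a = {b. 0 < b \<and> hsim a b}"

definition cls_le :: "'h::linordered_field set \<Rightarrow> 'h set \<Rightarrow> bool" where
  "cls_le A B \<longleftrightarrow> (\<forall>x\<in>A. \<forall>y\<in>B. hsim x y \<or> x < y)"

definition cls_less :: "'h::linordered_field set \<Rightarrow> 'h set \<Rightarrow> bool" where
  "cls_less A B \<longleftrightarrow> cls_le A B \<and> A \<noteq> B"

text \<open>Strict order on (representatives of) elements of the set of monotone sequences of classes.\<close>
definition seq_less :: "(nat \<Rightarrow> 'h::linordered_field set) \<Rightarrow> (nat \<Rightarrow> 'h set) \<Rightarrow> bool" where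
  "seq_less s t \<longleftrightarrow> (\<exists>M. \<forall>n m. n > M \<longrightarrow> m > M \<longrightarrow> cls_less (s n) (t m))"

text \<open>c = [J(v)] with v = 1 (any v > 0 gives the same class).\<close>
definition c_cls :: "((nat \<Rightarrow> real) \<Rightarrow> 'h::linordered_field) \<Rightarrow> 'h set" where
  "c_cls J = hcls (J (\<lambda>n. 1))"

definition infinitesimal_R :: "((nat \<Rightarrow> real) \<Rightarrow> 'h::linordered_field) \<Rightarrow> (nat \<Rightarrow> 'h set) \<Rightarrow> bool" where
  "infinitesimal_R J s \<longleftrightarrow> seq_less s (\<lambda>i. c_cls J)"

text \<open>r_eps(x) = [J((r(x,n,eps))_n)], an element of R*/~ (embedded in R as a constant sequence).\<close>
definition r_cls :: "((nat \<Rightarrow> real) \<Rightarrow> 'h::linordered_field) \<Rightarrow> ('a::metric_space \<Rightarrow> 'a) \<Rightarrow> real \<Rightarrow> 'a \<Rightarrow> 'h set" where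
  "r_cls J T \<epsilon> x = hcls (J (\<lambda>n. rad T x n \<epsilon>))"

end

theory Submission
  imports Defs
begin

text \<open>A point x is \<delta>-sensitive iff every ball around x contains a point whose orbit is
  \<delta>-separated from that of x at some time, i.e. iff the radii r(x,n,\<delta>) tend to 0; if x is not
  \<delta>-sensitive, some ball around x lies in every Bowen ball and the radii are bounded below by a
  positive real. Under J a nonnegative null sequence becomes an infinitesimal hyperreal, whose class
  lies strictly below c, whereas a sequence bounded below by a positive real becomes an appreciable
  bounded hyperreal, whose class is c itself.\<close>

definition sensitive_at :: "('a::metric_space \<Rightarrow> 'a) \<Rightarrow> real \<Rightarrow> 'a \<Rightarrow> bool" where
  "sensitive_at T \<delta> x \<longleftrightarrow> (\<forall>U. open U \<and> x \<in> U \<longrightarrow>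
      (\<exists>y\<in>U. \<exists>k::nat. dist ((T ^^ k) x) ((T ^^ k) y) > \<delta>))"

lemma sensitive_iff_sensitive_at: "sensitive T \<longleftrightarrow> (\<exists>\<delta>>0. \<forall>x. sensitive_at T \<delta> x)"
  unfolding sensitive_def sensitive_at_def by blast

lemma hyper_J_add: "hyper_J J \<Longrightarrow> J (\<lambda>n. \<phi> n + \<psi> n) = J \<phi> + J \<psi>"
  unfolding hyper_J_def by blast

lemma hyper_J_mult: "hyper_J J \<Longrightarrow> J (\<lambda>n. \<phi> n * \<psi> n) = J \<phi> * J \<psi>"
  unfolding hyper_J_def by blast

lemma hyper_J_one: "hyper_J J \<Longrightarrow> J (\<lambda>n. 1) = 1"
  unfolding hyper_J_def by blast

lemma hyper_J_zero: "hyper_J J \<Longrightarrow> J (\<lambda>n. 0) = 0"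
  using hyper_J_add[of J "\<lambda>n. 0" "\<lambda>n. 0"] by simp

lemma hyper_J_diff:
  assumes "hyper_J J"
  shows "J (\<lambda>n. \<phi> n - \<psi> n) = J \<phi> - J \<psi>"
  using hyper_J_add[OF assms, of "\<lambda>n. \<phi> n - \<psi> n" \<psi>] by simp

lemma hyper_J_of_nat:
  assumes "hyper_J J"
  shows "J (\<lambda>n. real k) = of_nat k"
proof (induction k)
  case 0
  show ?case using hyper_J_zero[OF assms] by simp
next
  case (Suc k)
  show ?case
    using hyper_J_add[OF assms, of "\<lambda>n. 1" "\<lambda>n. real k"] Suc hyper_J_one[OF assms] by simp
qed

lemma hyper_J_of_nat_mult:
  assumes "hyper_J J"
  shows "J (\<lambda>n. real k * \<phi> n) = of_nat k * J \<phi>"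
  using hyper_J_mult[OF assms, of "\<lambda>n. real k" \<phi>] hyper_J_of_nat[OF assms] by simp

lemma hyper_J_const_le:
  assumes "hyper_J J" and "1 \<le> k" and "\<And>n. 1 \<le> n \<Longrightarrow> a \<le> \<phi> (k * n)"
  shows "J (\<lambda>n. a) \<le> J \<phi>"
  using assms unfolding hyper_J_def by blast

lemma hyper_J_mono:
  assumes "hyper_J J" and "eventually (\<lambda>n. \<phi> n \<le> \<psi> n) sequentially"
  shows "J \<phi> \<le> J \<psi>"
proof -
  obtain N where N: "\<And>n. n \<ge> N \<Longrightarrow> \<phi> n \<le> \<psi> n"
    using assms(2) unfolding eventually_sequentially by blast
  have "J (\<lambda>n. 0) \<le> J (\<lambda>n. \<psi> n - \<phi> n)"
  proof (rule hyper_J_const_le[OF assms(1), of "N + 1"])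
    fix n :: nat
    assume "1 \<le> n"
    then have "N \<le> (N + 1) * n"
      by (metis le_add1 mult.commute mult_le_mono1 mult_1 order_trans)
    then show "0 \<le> \<psi> ((N + 1) * n) - \<phi> ((N + 1) * n)" using N by simp
  qed simp
  then show ?thesis
    using hyper_J_diff[OF assms(1)] hyper_J_zero[OF assms(1)] by simp
qed

lemma hbounded_mult: "hbounded a \<Longrightarrow> hbounded b \<Longrightarrow> hbounded (a * b)"
proof -
  assume "hbounded a" "hbounded b"
  then obtain k m where "\<bar>a\<bar> < of_nat k" "\<bar>b\<bar> < of_nat m"
    unfolding hbounded_def by blast
  then have "\<bar>a * b\<bar> < of_nat (k * m)"
    by (simp add: abs_mult mult_strict_mono')
  then show "hbounded (a * b)" unfolding hbounded_def by blast
qed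

lemma hbounded_one: "hbounded 1"
  unfolding hbounded_def by (rule exI[of _ 2]) simp

lemma hsim_refl: "a \<noteq> 0 \<Longrightarrow> hsim a a"
  unfolding hsim_def using hbounded_one by simp

lemma hsim_sym: "hsim a b \<Longrightarrow> hsim b a"
  unfolding hsim_def by blast

lemma hsim_trans:
  assumes "hsim a b" "hsim b c"
  shows "hsim a c"
proof -
  have "a / c = (a / b) * (b / c)" "c / a = (c / b) * (b / a)"
    using assms unfolding hsim_def by simp_all
  then show ?thesis using assms hbounded_mult unfolding hsim_def by metis
qed

lemma hcls_eq_if_hsim: "hsim a b \<Longrightarrow> hcls a = hcls b"
  unfolding hcls_def using hsim_sym hsim_trans by blast

lemma cls_less_hcls_one_if_infinitesimal:
  fixes a :: "'h::linordered_field"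
  assumes "0 \<le> a" and "\<And>m::nat. m > 0 \<Longrightarrow> a * of_nat m < 1"
  shows "cls_less (hcls a) (hcls 1)"
proof (cases "a = 0")
  case True
  then have "hcls a = {}" unfolding hcls_def hsim_def by simp
  moreover have "(1::'h) \<in> hcls 1" unfolding hcls_def using hsim_refl[of "1::'h"] by simp
  ultimately show ?thesis unfolding cls_less_def cls_le_def by auto
next
  case False
  then have a_pos: "a > 0" using assms(1) by simp
  have "x < y" if x: "x \<in> hcls a" and y: "y \<in> hcls 1" for x y
  proof -
    obtain K where K: "\<bar>x / a\<bar> < of_nat K" and "x > 0"
      using x unfolding hcls_def hsim_def hbounded_def by blast
    then have "x < of_nat K * a"
      using a_pos by (auto simp: field_simps abs_if split: if_splits)
    then have "K > 0" using \<open>x > 0\<close> by (cases K) auto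
    obtain L where L: "\<bar>1 / y\<bar> < of_nat L" and "y > 0"
      using y unfolding hcls_def hsim_def hbounded_def by blast
    then have "1 < of_nat L * y"
      by (auto simp: field_simps abs_if split: if_splits)
    then have "L > 0" by (cases L) auto
    have "of_nat L * x < of_nat L * (of_nat K * a)"
      using \<open>x < of_nat K * a\<close> \<open>L > 0\<close> by simp
    also have "\<dots> < 1"
      using assms(2)[of "K * L"] \<open>K > 0\<close> \<open>L > 0\<close> by (simp add: ac_simps)
    also have "\<dots> < of_nat L * y" by fact
    finally show "x < y" using \<open>L > 0\<close> by simp
  qed
  then have "cls_le (hcls a) (hcls 1)" unfolding cls_le_def by blast
  moreover have "a \<notin> hcls 1"
  proof
    assume "a \<in> hcls 1"
    then obtain L where "\<bar>1 / a\<bar> < of_nat L"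
      unfolding hcls_def hsim_def hbounded_def by blast
    then have "1 < a * of_nat L" using a_pos by (auto simp: field_simps)
    moreover have "L > 0" using calculation by (cases L) auto
    ultimately show False using assms(2)[of L] by simp
  qed
  moreover have "a \<in> hcls a" unfolding hcls_def using a_pos hsim_refl[of a] by simp
  ultimately show ?thesis unfolding cls_less_def by auto
qed

lemma not_cls_less_hcls_one_if_appreciable:
  fixes a :: "'h::linordered_field"
  assumes "1 \<le> of_nat N * a"
  shows "\<not> cls_less (hcls a) (hcls 1)"
proof -
  have "a > 0"
  proof (rule ccontr)
    assume "\<not> a > 0"
    then have "of_nat N * a \<le> 0" by (simp add: mult_nonneg_nonpos)
    then show False using assms by simp
  qed
  have "a \<in> hcls a" "(1::'h) \<in> hcls 1"
    unfolding hcls_def using \<open>a > 0\<close> hsim_refl[of a] hsim_refl[of "1::'h"] by simp_all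
  show ?thesis
  proof (cases "hbounded a")
    case False
    then have "\<not> hsim a 1" "\<not> a < 1"
      unfolding hsim_def hbounded_def using \<open>a > 0\<close> by (auto dest: spec[of _ 1])
    then show ?thesis
      using \<open>a \<in> hcls a\<close> \<open>1 \<in> hcls 1\<close> unfolding cls_less_def cls_le_def by blast
  next
    case True
    have "\<bar>1 / a\<bar> < of_nat (N + 1)"
      using assms \<open>a > 0\<close> by (simp add: field_simps)
    then have "hbounded (1 / a)" unfolding hbounded_def by blast
    then have "hsim a 1" unfolding hsim_def using True \<open>a > 0\<close> by simp
    then show ?thesis using hcls_eq_if_hsim unfolding cls_less_def by blast
  qed
qed

lemma cls_less_hcls_one_if_tendsto_zero:
  assumes "hyper_J J" and "\<And>n. 0 \<le> \<phi> n" and "\<phi> \<longlonglongrightarrow> 0"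
  shows "cls_less (hcls (J \<phi>)) (hcls 1)"
proof (rule cls_less_hcls_one_if_infinitesimal)
  show "0 \<le> J \<phi>"
    using hyper_J_mono[OF assms(1), of "\<lambda>n. 0" \<phi>] assms(2) hyper_J_zero[OF assms(1)] by simp
  fix m :: nat
  assume "m > 0"
  then have "eventually (\<lambda>n. \<phi> n < 1 / real (2 * m)) sequentially"
    using assms(3) by (intro order_tendstoD(2)) auto
  then have "eventually (\<lambda>n. real (2 * m) * \<phi> n \<le> 1) sequentially"
    by eventually_elim (use \<open>m > 0\<close> in \<open>simp add: field_simps\<close>)
  then have "J (\<lambda>n. real (2 * m) * \<phi> n) \<le> J (\<lambda>n. 1)"
    by (rule hyper_J_mono[OF assms(1)])
  then have "of_nat (2 * m) * J \<phi> \<le> 1"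
    unfolding hyper_J_of_nat_mult[OF assms(1)] hyper_J_one[OF assms(1)] .
  moreover have "of_nat (2 * m) * J \<phi> = 2 * (J \<phi> * of_nat m)" by simp
  ultimately show "J \<phi> * of_nat m < 1" by linarith
qed

lemma not_cls_less_hcls_one_if_bounded_below:
  assumes "hyper_J J" and "0 < c" and "\<And>n. c \<le> \<phi> n"
  shows "\<not> cls_less (hcls (J \<phi>)) (hcls 1)"
proof -
  obtain N :: nat where "1 / c \<le> real N" using real_arch_simple by blast
  then have "1 \<le> real N * c" using assms(2) by (simp add: field_simps)
  then have "1 \<le> real N * \<phi> n" for n
    using assms(3)[of n] by (meson order_trans mult_left_mono of_nat_0_le_iff)
  then have "1 \<le> of_nat N * J \<phi>"
    using hyper_J_mono[OF assms(1), of "\<lambda>n. 1" "\<lambda>n. real N * \<phi> n"]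
      hyper_J_one[OF assms(1)] hyper_J_of_nat_mult[OF assms(1)] by simp
  then show ?thesis by (rule not_cls_less_hcls_one_if_appreciable)
qed

lemma infinitesimal_R_const_iff:
  assumes "hyper_J J"
  shows "infinitesimal_R J (\<lambda>i. A) \<longleftrightarrow> cls_less A (hcls 1)"
  unfolding infinitesimal_R_def seq_less_def c_cls_def hyper_J_one[OF assms]
  by (meson less_add_one)

lemma rad_nonneg: "0 \<le> rad T x n \<epsilon>"
proof -
  define S where "S = {r. 0 < r \<and> ball x r \<subseteq> bowen_ball T n x \<epsilon>}"
  have "0 \<le> Sup S" if "s \<in> S" "bdd_above S" for s
    using cSup_upper[OF that] that(1) unfolding S_def by simp
  then show ?thesis unfolding rad_def S_def[symmetric] Let_def by auto
qed

lemma rad_le_if_not_subset: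
  assumes "0 < r" and "\<not> ball x r \<subseteq> bowen_ball T n x \<epsilon>"
  shows "rad T x n \<epsilon> \<le> r"
proof -
  define S where "S = {r. 0 < r \<and> ball x r \<subseteq> bowen_ball T n x \<epsilon>}"
  have le: "s \<le> r" if "s \<in> S" for s
  proof (rule ccontr)
    assume "\<not> s \<le> r"
    then have "ball x r \<subseteq> ball x s" by auto
    then show False using that assms(2) unfolding S_def by auto
  qed
  have "bdd_above S" using le by (rule bdd_aboveI)
  moreover have "S \<noteq> {} \<Longrightarrow> Sup S \<le> r" using le by (simp add: cSup_least)
  ultimately show ?thesis unfolding rad_def S_def[symmetric] Let_def using assms(1) by auto
qed

text \<open>The cap at 1 comes from the convention that an unbounded set of radii gives the value 1.\<close>
lemma rad_ge_if_subset:
  assumes "0 < r" and "ball x r \<subseteq> bowen_ball T n x \<epsilon>"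
  shows "min r 1 \<le> rad T x n \<epsilon>"
proof -
  define S where "S = {r. 0 < r \<and> ball x r \<subseteq> bowen_ball T n x \<epsilon>}"
  have "r \<in> S" using assms unfolding S_def by auto
  then have "bdd_above S \<Longrightarrow> r \<le> Sup S" by (rule cSup_upper)
  then show ?thesis unfolding rad_def S_def[symmetric] Let_def using \<open>r \<in> S\<close> by auto
qed

lemma rad_tendsto_zero_if_sensitive_at:
  assumes "sensitive_at T \<delta> x"
  shows "(\<lambda>n. rad T x n \<delta>) \<longlonglongrightarrow> 0"
proof (rule metric_LIMSEQ_I)
  fix e :: real
  assume "0 < e"
  then obtain y k where y: "y \<in> ball x (e / 2)" and k: "dist ((T ^^ k) x) ((T ^^ k) y) > \<delta>"
    using assms unfolding sensitive_at_def by (meson centre_in_ball half_gt_zero open_ball)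
  have "rad T x n \<delta> \<le> e / 2" if "k \<le> n" for n
  proof (rule rad_le_if_not_subset)
    have "y \<notin> bowen_ball T n x \<delta>"
      using k that unfolding bowen_ball_def by (auto simp: dist_commute)
    then show "\<not> ball x (e / 2) \<subseteq> bowen_ball T n x \<delta>" using y by blast
  qed (use \<open>0 < e\<close> in simp)
  then have "dist (rad T x n \<delta>) 0 < e" if "k \<le> n" for n
    using that \<open>0 < e\<close> by (fastforce simp: abs_of_nonneg rad_nonneg)
  then show "\<exists>N. \<forall>n\<ge>N. dist (rad T x n \<delta>) 0 < e" by blast
qed

lemma rad_bounded_below_if_not_sensitive_at:
  assumes "\<not> sensitive_at T \<delta> x"
  shows "\<exists>c>0. \<forall>n. c \<le> rad T x n \<delta>"
proof -
  obtain U where "open U" "x \<in> U" and close: "\<And>y k. y \<in> U \<Longrightarrow> dist ((T ^^ k) x) ((T ^^ k) y) \<le> \<delta>"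
    using assms unfolding sensitive_at_def by (meson not_less)
  then obtain r where "0 < r" "ball x r \<subseteq> U" using open_contains_ball by blast
  then have subset: "ball x r \<subseteq> bowen_ball T n x \<delta>" for n
    using close unfolding bowen_ball_def by (auto simp: dist_commute)
  have "min r 1 \<le> rad T x n \<delta>" for n using rad_ge_if_subset[OF \<open>0 < r\<close> subset] .
  then show ?thesis using \<open>0 < r\<close> by (intro exI[of _ "min r 1"]) simp
qed

lemma infinitesimal_r_cls_iff_sensitive_at:
  assumes "hyper_J J"
  shows "infinitesimal_R J (\<lambda>i. r_cls J T \<delta> x) \<longleftrightarrow> sensitive_at T \<delta> x"
  unfolding infinitesimal_R_const_iff[OF assms] r_cls_def
proof
  assume less: "cls_less (hcls (J (\<lambda>n. rad T x n \<delta>))) (hcls 1)"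
  show "sensitive_at T \<delta> x"
  proof (rule ccontr)
    assume "\<not> sensitive_at T \<delta> x"
    then obtain c where "0 < c" "\<And>n. c \<le> rad T x n \<delta>"
      using rad_bounded_below_if_not_sensitive_at by blast
    then have "\<not> cls_less (hcls (J (\<lambda>n. rad T x n \<delta>))) (hcls 1)"
      by (rule not_cls_less_hcls_one_if_bounded_below[OF assms])
    then show False using less by contradiction
  qed
next
  assume "sensitive_at T \<delta> x"
  then show "cls_less (hcls (J (\<lambda>n. rad T x n \<delta>))) (hcls 1)"
    by (intro cls_less_hcls_one_if_tendsto_zero[OF assms] rad_nonneg
        rad_tendsto_zero_if_sensitive_at)
qed

theorem mainTheorem4:
  fixes J :: "(nat \<Rightarrow> real) \<Rightarrow> 'h::linordered_field"
    and T :: "'a::metric_space \<Rightarrow> 'a"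
  assumes "hyper_J J"
  shows "sensitive T \<longleftrightarrow>
           (\<exists>\<delta>>0. \<forall>x. infinitesimal_R J (\<lambda>i. r_cls J T \<delta> x))"
  unfolding sensitive_iff_sensitive_at infinitesimal_r_cls_iff_sensitive_at[OF assms] ..

end
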